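(* Assume $N\ge3$. If $M>0$ and $1<p\le\frac{N+2}{N-2}$, system (S) admits no closed orbit (nonconstant periodic trajectory) contained in the closed quadrant $\{x\ge0,y\ge0\}$. If $p>\frac{N+2}{N-2}$ and $0<M\le\overline M$, system (S) admits no cycle in the open quadrant $\{x>0,y>0\}$ surrounding $P_M$.
   Context: Let $K=\frac{(N-2)p-N}{p-1}$. System (S) is $x_t=\frac{2}{p-1}x-y$, $y_t=-Ky+|x|^{p-1}x+M|y|^{\frac{2p}{p+1}}$. For $p>\frac{N}{N-2}$, $M\ge0$, $X_M$ is the unique positive root of $X^{p-1}+M\left(\frac{2}{p-1}\right)^{\frac{2p}{p+1}}X^{\frac{p-1}{p+1}}-\frac{2K}{p-1}=0$ and $P_M=(X_M,\frac{2}{p-1}X_M)$. $\overline M=\frac{(p+1)((N-2)p-N-2)}{(4p)^{\frac{p}{p+1}}((N-2)(p-1)^2+4)^{\frac{1}{p+1}}}$. A cycle surrounding $P_M$ is a nonconstant periodic orbit whose bounded complementary region contains $P_M$. *)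

theory Defs
  imports "HOL-Analysis.Analysis"
begin

definition Kc :: "nat \<Rightarrow> real \<Rightarrow> real" where
  "Kc N p = ((real N - 2) * p - real N) / (p - 1)"

definition fS :: "nat \<Rightarrow> real \<Rightarrow> real \<Rightarrow> real \<Rightarrow> real \<Rightarrow> real" where
  "fS N p M x y = 2 / (p - 1) * x - y"

definition gS :: "nat \<Rightarrow> real \<Rightarrow> real \<Rightarrow> real \<Rightarrow> real \<Rightarrow> real" where
  "gS N p M x y = - Kc N p * y + \<bar>x\<bar> powr (p - 1) * x + M * \<bar>y\<bar> powr (2 * p / (p + 1))"

definition solS :: "nat \<Rightarrow> real \<Rightarrow> real \<Rightarrow> (real \<Rightarrow> real) \<Rightarrow> (real \<Rightarrow> real) \<Rightarrow> bool" where
  "solS N p M x y \<longleftrightarrow>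
     (\<forall>t. (x has_real_derivative fS N p M (x t) (y t)) (at t) \<and>
          (y has_real_derivative gS N p M (x t) (y t)) (at t))"

definition closed_orbitS :: "nat \<Rightarrow> real \<Rightarrow> real \<Rightarrow> (real \<Rightarrow> real) \<Rightarrow> (real \<Rightarrow> real) \<Rightarrow> bool" where
  "closed_orbitS N p M x y \<longleftrightarrow>
     solS N p M x y \<and>
     (\<exists>T>0. \<forall>t. x (t + T) = x t \<and> y (t + T) = y t) \<and>
     (\<exists>s t. (x s, y s) \<noteq> (x t, y t))"

definition orbit_set :: "(real \<Rightarrow> real) \<Rightarrow> (real \<Rightarrow> real) \<Rightarrow> (real \<times> real) set" where
  "orbit_set x y = range (\<lambda>t. (x t, y t))"

definition surrounds :: "(real \<times> real) set \<Rightarrow> real \<times> real \<Rightarrow> bool" where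
  "surrounds \<Gamma> P \<longleftrightarrow> P \<notin> \<Gamma> \<and> bounded (connected_component_set (- \<Gamma>) P)"

definition XM :: "nat \<Rightarrow> real \<Rightarrow> real \<Rightarrow> real" where
  "XM N p M = (THE X. X > 0 \<and>
      X powr (p - 1) + M * (2 / (p - 1)) powr (2 * p / (p + 1)) * X powr ((p - 1) / (p + 1))
        - 2 * Kc N p / (p - 1) = 0)"

definition PM :: "nat \<Rightarrow> real \<Rightarrow> real \<Rightarrow> real \<times> real" where
  "PM N p M = (XM N p M, 2 / (p - 1) * XM N p M)"

definition Mbar :: "nat \<Rightarrow> real \<Rightarrow> real" where
  "Mbar N p = (p + 1) * ((real N - 2) * p - real N - 2) /
     ((4 * p) powr (p / (p + 1)) * ((real N - 2) * (p - 1)^2 + 4) powr (1 / (p + 1)))"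

end

theory Submission
  imports Defs
begin

(* Both parts are Lyapunov-function arguments. In each parameter range there is a function
   V(x, y) whose derivative along (S) is nonnegative on the relevant quadrant and vanishes only
   on the line y = a x, a = 2/(p - 1). Along a periodic orbit V is periodic, so its derivative
   vanishes identically; the orbit then lies on that line, where the first equation of (S)
   reads x' = 0, so it is constant.
   For p <= (N+2)/(N-2), V is an energy whose derivative is
   (a - K) (a x - y)^2 + M (a x - y) ((a x)^q - y^q) with q = 2p/(p+1); it is nonnegative
   because a >= K exactly in this range. For p > (N+2)/(N-2), V carries the weight
   x^alpha y^(-b) and its derivative is (a x - y) (h(x, y) - h(x, a x)) with h = profile.
   A weighted AM-GM inequality, which is where M <= Mbar enters, makes h(x, .) strictly
   decreasing. *)

lemma periodic_nonneg_deriv_eq_0: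
  fixes \<phi> d :: "real \<Rightarrow> real"
  assumes deriv: "\<And>t. (\<phi> has_real_derivative d t) (at t)" and nonneg: "\<And>t. d t \<ge> 0"
    and "T > 0" and periodic: "\<And>t. \<phi> (t + T) = \<phi> t"
  shows "d t = 0"
proof (rule ccontr)
  assume "d t \<noteq> 0"
  with nonneg[of t] have "d t > 0" by linarith
  from DERIV_pos_inc_right[OF deriv this] obtain \<delta> where "\<delta> > 0"
    and inc: "\<And>h. 0 < h \<Longrightarrow> h < \<delta> \<Longrightarrow> \<phi> t < \<phi> (t + h)" by blast
  define h where "h = min (\<delta> / 2) (T / 2)"
  have h: "0 < h" "h < \<delta>" "h \<le> T" using \<open>\<delta> > 0\<close> \<open>T > 0\<close> by (auto simp: h_def)
  have "\<phi> t < \<phi> (t + h)" using inc h by simp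
  also have "\<dots> \<le> \<phi> (t + T)"
    by (rule DERIV_nonneg_imp_nondecreasing[of "t + h" "t + T"]) (use h deriv nonneg in auto)
  also have "\<dots> = \<phi> t" by (rule periodic)
  finally show False by simp
qed

lemma DERIV_neg_off_point_imp_decreasing:
  fixes g g' :: "real \<Rightarrow> real"
  assumes deriv: "\<And>y. c < y \<Longrightarrow> (g has_real_derivative g' y) (at y)"
    and neg: "\<And>y. c < y \<Longrightarrow> y \<noteq> z \<Longrightarrow> g' y < 0"
    and "c < y\<^sub>1" "y\<^sub>1 < y\<^sub>2"
  shows "g y\<^sub>2 < g y\<^sub>1"
proof -
  have decreasing: "g v < g u" if "c < u" "u < v" "\<not> (u < z \<and> z < v)" for u v
  proof (rule DERIV_neg_imp_decreasing_open[OF \<open>u < v\<close>])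
    show "\<exists>d. (g has_real_derivative d) (at s) \<and> d < 0" if "u < s" "s < v" for s
    proof -
      have "c < s" "s \<noteq> z" using that \<open>c < u\<close> \<open>\<not> (u < z \<and> z < v)\<close> by auto
      then show ?thesis using deriv neg by blast
    qed
    show "continuous_on {u..v} g"
      using \<open>c < u\<close> by (intro continuous_at_imp_continuous_on ballI) (auto intro!: DERIV_isCont[OF deriv])
  qed
  show ?thesis
  proof (cases "y\<^sub>1 < z \<and> z < y\<^sub>2")
    case True
    then have "g z < g y\<^sub>1" "g y\<^sub>2 < g z" using assms(3,4) by (auto intro!: decreasing)
    then show ?thesis by simp
  qed (use assms(3,4) decreasing in auto)
qed

lemma powr_less_weighted_mean:
  fixes t l :: real
  assumes "t > 0" "t \<noteq> 1" and "0 < l" "l < 1"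
  shows "t powr l < l * t + (1 - l)"
proof -
  define g where "g s = l * s + (1 - l) - s powr l" for s
  have deriv: "(g has_real_derivative l - l * s powr (l - 1)) (at s)" if "s > 0" for s
    unfolding g_def using that by (auto intro!: derivative_eq_intros)
  have cont: "continuous_on {u..v} g" if "u > 0" for u v
    using that by (intro continuous_at_imp_continuous_on ballI) (auto intro!: DERIV_isCont[OF deriv])
  consider "1 < t" | "t < 1" using \<open>t \<noteq> 1\<close> by linarith
  then have "g 1 < g t"
  proof cases
    case 1
    show ?thesis
    proof (rule DERIV_pos_imp_increasing_open[OF 1 _ cont])
      fix s assume "1 < s" "s < t"
      then have "s powr (l - 1) < 1" using assms by (simp add: powr_less_one)
      then show "\<exists>d. (g has_real_derivative d) (at s) \<and> d > 0"
        using deriv[of s] \<open>1 < s\<close> \<open>0 < l\<close> by auto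
    qed simp
  next
    case 2
    show ?thesis
    proof (rule DERIV_neg_imp_decreasing_open[OF 2 _ cont])
      fix s assume "t < s" "s < 1"
      then have "s powr (l - 1) > 1"
        using powr_less_mono2_neg[of "l - 1" s 1] assms by simp
      then show "\<exists>d. (g has_real_derivative d) (at s) \<and> d < 0"
        using deriv[of s] \<open>t < s\<close> assms by auto
    qed (use assms in simp)
  qed
  then show ?thesis by (simp add: g_def)
qed

lemma has_real_derivative_abs_powr:
  fixes r s :: real
  assumes "r > 0"
  shows "((\<lambda>s. \<bar>s\<bar> powr (r + 1) / (r + 1)) has_real_derivative \<bar>s\<bar> powr (r - 1) * s) (at s)"
proof (cases "s = 0")
  case True
  have lim: "((\<lambda>h. \<bar>h\<bar> powr r / (r + 1)) \<longlongrightarrow> 0) (at (0::real))"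
  proof -
    have "((\<lambda>h. \<bar>h\<bar> powr r) \<longlongrightarrow> 0) (at (0::real))"
      by (rule tendsto_zero_powrI) (use assms in \<open>auto intro!: tendsto_eq_intros\<close>)
    then show ?thesis by (rule tendsto_divide_zero)
  qed
  have "((\<lambda>h. (\<bar>0 + h\<bar> powr (r + 1) / (r + 1) - \<bar>0::real\<bar> powr (r + 1) / (r + 1)) / h) \<longlongrightarrow> 0) (at 0)"
  proof (rule tendsto_norm_zero_cancel)
    have ev: "\<forall>\<^sub>F h in at (0::real). \<bar>h\<bar> powr r / (r + 1) = norm ((\<bar>0 + h\<bar> powr (r + 1) / (r + 1) - \<bar>0::real\<bar> powr (r + 1) / (r + 1)) / h)"
      unfolding eventually_at_filter
      using assms by (auto simp: powr_add abs_mult)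
    then show "((\<lambda>h. norm ((\<bar>0 + h\<bar> powr (r + 1) / (r + 1) - \<bar>0::real\<bar> powr (r + 1) / (r + 1)) / h)) \<longlongrightarrow> 0) (at 0)"
      using tendsto_cong[OF ev] lim by blast
  qed
  then show ?thesis using True by (simp add: DERIV_def)
next
  case False
  have square: "z * z = \<bar>z\<bar> powr 2" for z :: real
    by (cases "z = 0") (auto simp: powr_numeral power2_eq_square[symmetric])
  have halves: "2 * ((r + 1) / 2) = r + 1" "2 * ((r + 1) / 2 - 1) = r - 1" by simp_all
  have "s * s > 0" using False not_real_square_gt_zero by blast
  then have "((\<lambda>s. (s * s) powr ((r + 1) / 2) / (r + 1)) has_real_derivative
      (r + 1) / 2 * (s * s) powr ((r + 1) / 2 - 1) * (s + s) / (r + 1)) (at s)"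
    by (auto intro!: derivative_eq_intros)
  also have "(r + 1) / 2 * (s * s) powr ((r + 1) / 2 - 1) * (s + s) / (r + 1) = \<bar>s\<bar> powr (r - 1) * s"
    unfolding square powr_powr halves using assms by (simp add: field_simps)
  also have "(\<lambda>s. (s * s) powr ((r + 1) / 2) / (r + 1)) = (\<lambda>s. \<bar>s\<bar> powr (r + 1) / (r + 1))"
    unfolding square powr_powr halves ..
  finally show ?thesis .
qed
lemma abs_powr_diff_one_mult: "(s::real) \<ge> 0 \<Longrightarrow> \<bar>s\<bar> powr (r - 1) * s = s powr r"
  by (cases "s = 0") (auto simp: powr_diff)

lemma powr_diff_one_eq: "(z::real) > 0 \<Longrightarrow> z powr (r - 1) = z powr r * inverse z"
  by (simp add: powr_diff divide_inverse)

lemma diff_mult_powr_diff_pos: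
  fixes A B q :: real
  assumes "A \<ge> 0" "B \<ge> 0" "q > 0" "A \<noteq> B"
  shows "(A - B) * (A powr q - B powr q) > 0"
proof (cases "A < B")
  case True
  then have "A powr q < B powr q" using assms by (simp add: powr_less_mono2)
  then show ?thesis using True by (simp add: mult_neg_neg)
next
  case False
  then have "B < A" using assms by simp
  then have "B powr q < A powr q" using assms by (simp add: powr_less_mono2)
  then show ?thesis using \<open>B < A\<close> by simp
qed

locale systemS =
  fixes N :: nat and p M :: real
  assumes p_gt_1: "p > 1"
begin

definition a :: real where "a = 2 / (p - 1)"

definition q :: real where "q = 2 * p / (p + 1)"

lemma a_pos: "a > 0"
  using p_gt_1 by (simp add: a_def)

lemma q_gt_1: "q > 1"
  using p_gt_1 by (simp add: q_def field_simps)

lemma solS_derivatives: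
  assumes "solS N p M x y"
  shows "(x has_real_derivative a * x t - y t) (at t)"
    and "(y has_real_derivative - Kc N p * y t + \<bar>x t\<bar> powr (p - 1) * x t + M * \<bar>y t\<bar> powr q) (at t)"
  using assms unfolding solS_def fS_def gS_def a_def q_def by auto

lemma Lyapunov_excludes_closed_orbitS:
  assumes orbit: "closed_orbitS N p M x y"
    and V_deriv: "\<And>t. ((\<lambda>t. V (x t) (y t)) has_real_derivative d t) (at t)"
    and off_line: "\<And>t. y t \<noteq> a * x t \<Longrightarrow> d t > 0" and on_line: "\<And>t. y t = a * x t \<Longrightarrow> d t = 0"
  shows False
proof -
  from orbit obtain T where "T > 0" and periodic: "\<And>t. x (t + T) = x t \<and> y (t + T) = y t"
    and sol: "solS N p M x y" and nonconstant: "\<exists>s t. (x s, y s) \<noteq> (x t, y t)"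
    unfolding closed_orbitS_def by blast
  have "d t \<ge> 0" for t using off_line on_line by (cases "y t = a * x t") force+
  then have "d t = 0" for t
    by (rule periodic_nonneg_deriv_eq_0[OF V_deriv _ \<open>T > 0\<close>]) (simp add: periodic)
  then have line: "y t = a * x t" for t using off_line by force
  have "\<forall>t. (x has_real_derivative 0) (at t)"
    using solS_derivatives(1)[OF sol] line by simp
  then have "x s = x t" for s t by (rule DERIV_isconst_all)
  then show False using nonconstant line by auto
qed

definition energy :: "real \<Rightarrow> real \<Rightarrow> real" where
  "energy X Y = (a * X - Y)\<^sup>2 / 2 + \<bar>X\<bar> powr (p + 1) / (p + 1) - a * Kc N p * X\<^sup>2 / 2
     + M / a * (\<bar>a * X\<bar> powr (q + 1) / (q + 1))"

lemma has_real_derivative_energy: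
  assumes "solS N p M x y"
  shows "((\<lambda>t. energy (x t) (y t)) has_real_derivative
      (a - Kc N p) * (a * x t - y t)\<^sup>2 + M * (a * x t - y t) * (\<bar>a * x t\<bar> powr (q - 1) * (a * x t) - \<bar>y t\<bar> powr q))
    (at t)"
proof -
  note dx = solS_derivatives(1)[OF assms] and dy = solS_derivatives(2)[OF assms]
  have d1: "((\<lambda>t. \<bar>x t\<bar> powr (p + 1) / (p + 1)) has_real_derivative
      \<bar>x t\<bar> powr (p - 1) * x t * (a * x t - y t)) (at t)"
    using DERIV_chain2[OF has_real_derivative_abs_powr dx] p_gt_1 by simp
  have d2: "((\<lambda>t. \<bar>a * x t\<bar> powr (q + 1) / (q + 1)) has_real_derivative
      \<bar>a * x t\<bar> powr (q - 1) * (a * x t) * (a * (a * x t - y t))) (at t)"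
    using DERIV_chain2[OF has_real_derivative_abs_powr DERIV_cmult[OF dx]] q_gt_1 by simp
  show ?thesis
    unfolding energy_def
    apply (rule d1 d2 derivative_eq_intros dx dy refl | (simp; fail))+
    using a_pos by (simp add: power2_eq_square field_simps)
qed

end

locale subcritical = systemS +
  assumes N_ge_3: "N \<ge> 3" and p_le: "p \<le> (real N + 2) / (real N - 2)" and M_pos: "M > 0"
begin

lemma Kc_le_a: "Kc N p \<le> a"
proof -
  have "p * (real N - 2) \<le> real N + 2" using p_le N_ge_3 by (simp add: le_divide_eq)
  then have "0 \<le> (2 - ((real N - 2) * p - real N)) / (p - 1)" using p_gt_1 by (simp add: algebra_simps)
  also have "\<dots> = a - Kc N p" by (simp add: a_def Kc_def diff_divide_distrib)
  finally show ?thesis by simp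
qed

theorem no_closed_orbitS_in_closed_quadrant:
  assumes orbit: "closed_orbitS N p M x y" and nonneg: "\<And>t. x t \<ge> 0 \<and> y t \<ge> 0"
  shows False
proof -
  have sol: "solS N p M x y" using orbit by (simp add: closed_orbitS_def)
  have off_line: "(a - Kc N p) * (a * x t - y t)\<^sup>2
      + M * (a * x t - y t) * (\<bar>a * x t\<bar> powr (q - 1) * (a * x t) - \<bar>y t\<bar> powr q) > 0"
    if "y t \<noteq> a * x t" for t
  proof -
    have ax: "a * x t \<ge> 0" and y: "y t \<ge> 0" using nonneg a_pos by auto
    have "(a * x t - y t) * ((a * x t) powr q - y t powr q) > 0"
      using that ax y q_gt_1 by (intro diff_mult_powr_diff_pos) auto
    then have "M * ((a * x t - y t) * ((a * x t) powr q - y t powr q)) > 0"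
      using M_pos by simp
    moreover have "(a - Kc N p) * (a * x t - y t)\<^sup>2 \<ge> 0" using Kc_le_a by simp
    moreover have "\<bar>a * x t\<bar> powr (q - 1) * (a * x t) = (a * x t) powr q" "\<bar>y t\<bar> = y t"
      using abs_powr_diff_one_mult[OF ax] y by auto
    ultimately show ?thesis by (simp add: mult.assoc)
  qed
  show False
    by (rule Lyapunov_excludes_closed_orbitS[OF orbit has_real_derivative_energy[OF sol] off_line]) auto
qed

end

locale supercritical =
  fixes N :: nat and p M :: real
  assumes N_ge_3: "N \<ge> 3" and p_gt: "(real N + 2) / (real N - 2) < p"
    and M_le_Mbar: "M \<le> Mbar N p"
begin

lemma N_minus_2_mult_p_minus_1_gt_4: "(real N - 2) * (p - 1) > 4"
proof -
  have "real N + 2 < p * (real N - 2)" using p_gt N_ge_3 by (simp add: divide_less_eq)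
  then show ?thesis by (simp add: algebra_simps)
qed

end

sublocale supercritical \<subseteq> systemS
proof
  have "(real N - 2) * (p - 1) > 0" using N_minus_2_mult_p_minus_1_gt_4 by linarith
  then show "p > 1" using N_ge_3 by (simp add: zero_less_mult_iff)
qed

context supercritical
begin

(* Exponents of the weight x^alpha y^(-b), chosen so that K (1 - b) = a (alpha + 1), which
   makes the derivative of lyapunov along (S) factor through a x - y, and so that the weighted
   AM-GM estimate of profile_slope_neg is sharp exactly at M = Mbar. *)
definition b :: real where
  "b = 2 * ((real N - 2) * (p - 1) - 4) / ((p + 1) * (real N - 2) * (p - 1))"

definition \<alpha> :: real where
  "\<alpha> = b * ((real N - 2) * (p - 1)\<^sup>2 + 4) / 4"

lemma N_minus_2_pos: "real N - 2 > 0"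
  using N_ge_3 by simp

lemma b_denominator_pos: "(p + 1) * (real N - 2) * (p - 1) > 0"
  using p_gt_1 N_minus_2_pos by simp

lemma b_pos: "b > 0"
  unfolding b_def using N_minus_2_mult_p_minus_1_gt_4 b_denominator_pos by (intro divide_pos_pos) (auto simp: algebra_simps)

lemma alpha_pos: "\<alpha> > 0"
  using b_pos N_minus_2_pos by (simp add: \<alpha>_def add_nonneg_pos)

lemma b_less_1: "b < 1"
proof -
  have "(p + 1) * (real N - 2) * (p - 1) - 2 * ((real N - 2) * (p - 1) - 4) = (real N - 2) * (p - 1)\<^sup>2 + 8"
    by (simp add: algebra_simps power2_eq_square)
  moreover have "(real N - 2) * (p - 1)\<^sup>2 \<ge> 0" using N_minus_2_pos by simp
  ultimately have "2 * ((real N - 2) * (p - 1) - 4) < (p + 1) * (real N - 2) * (p - 1)" by linarith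
  then show ?thesis unfolding b_def using b_denominator_pos by (simp only: divide_less_eq_1_pos)
qed

lemma q_minus_b: "q - b = 2 * ((real N - 2) * (p - 1)\<^sup>2 + 4) / ((p + 1) * (real N - 2) * (p - 1))"
proof -
  define Z where "Z = (p + 1) * (real N - 2) * (p - 1)"
  have "q = 2 * p * (real N - 2) * (p - 1) / Z"
    using b_denominator_pos p_gt_1 N_minus_2_pos by (simp add: Z_def q_def)
  then have "q - b = (2 * p * (real N - 2) * (p - 1) - 2 * ((real N - 2) * (p - 1) - 4)) / Z"
    by (simp add: b_def Z_def diff_divide_distrib)
  also have "\<dots> = 2 * ((real N - 2) * (p - 1)\<^sup>2 + 4) / Z"
    by (simp add: algebra_simps power2_eq_square)
  finally show ?thesis by (simp add: Z_def)
qed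

lemma b_less_q: "b < q"
proof -
  have "0 < 2 * ((real N - 2) * (p - 1)\<^sup>2 + 4) / ((p + 1) * (real N - 2) * (p - 1))"
    using N_minus_2_pos b_denominator_pos by (intro divide_pos_pos) (auto simp: add_nonneg_pos)
  then show ?thesis using q_minus_b by linarith
qed

lemma a_alpha_eq_Kc_b: "a * (\<alpha> + 1) = Kc N p * (1 - b)"
proof -
  define n m D Z where "n = real N - 2" and "m = n * (p - 1) - 4"
    and "D = n * (p - 1)\<^sup>2 + 4" and "Z = (p + 1) * n * (p - 1)"
  have Z: "Z > 0" using b_denominator_pos by (simp add: Z_def n_def)
  have b: "b = 2 * m / Z" by (simp add: b_def n_def m_def Z_def)
  have \<alpha>: "\<alpha> = m * D / (2 * Z)" using Z by (simp add: \<alpha>_def b D_def n_def field_simps)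
  have "a * (\<alpha> + 1) = (m * D + 2 * Z) / ((p - 1) * Z)"
    using p_gt_1 Z by (simp add: a_def \<alpha> field_simps)
  also have "m * D + 2 * Z = (n * (p - 1) - 2) * (Z - 2 * m)"
    by (simp add: m_def D_def Z_def algebra_simps power2_eq_square)
  also have "(n * (p - 1) - 2) * (Z - 2 * m) / ((p - 1) * Z) = (n - a) * (1 - b)"
    using p_gt_1 Z by (simp add: a_def b field_simps)
  also have "n - a = Kc N p"
    using p_gt_1 by (simp add: n_def a_def Kc_def field_simps)
  finally show ?thesis .
qed

lemma Mbar_balance: "Mbar N p * (q - b) * (p * b / \<alpha>) powr (p / (p + 1)) = (p + 1) * b"
proof -
  define m D Z where "m = (real N - 2) * (p - 1) - 4" and "D = (real N - 2) * (p - 1)\<^sup>2 + 4"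
    and "Z = (p + 1) * (real N - 2) * (p - 1)"
  have Z: "Z > 0" using b_denominator_pos by (simp add: Z_def)
  have D: "D > 0" using N_minus_2_pos by (simp add: D_def add_nonneg_pos)
  have b: "b = 2 * m / Z" by (simp add: b_def m_def Z_def)
  have pb\<alpha>: "p * b / \<alpha> = 4 * p / D"
    using b_pos D by (simp add: \<alpha>_def D_def)
  have Mbar: "Mbar N p = (p + 1) * m / ((4 * p) powr (p / (p + 1)) * D powr (1 / (p + 1)))"
    by (simp add: Mbar_def m_def D_def algebra_simps)
  have "1 / (p + 1) + p / (p + 1) = 1" using p_gt_1 by (simp add: add_divide_distrib[symmetric])
  then have DD: "D powr (1 / (p + 1)) * D powr (p / (p + 1)) = D"
    using D by (simp flip: powr_add)
  have pos: "(4 * p) powr (p / (p + 1)) > 0" "D powr (1 / (p + 1)) > 0" "D powr (p / (p + 1)) > 0"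
    using p_gt_1 D by auto
  have "Mbar N p * (q - b) * (p * b / \<alpha>) powr (p / (p + 1))
      = (p + 1) * m / ((4 * p) powr (p / (p + 1)) * D powr (1 / (p + 1))) * (2 * D / Z)
        * ((4 * p) powr (p / (p + 1)) / D powr (p / (p + 1)))"
    unfolding Mbar q_minus_b pb\<alpha> using p_gt_1 D by (simp add: powr_divide D_def Z_def)
  also have "\<dots> = (p + 1) * (2 * m) * D / (Z * (D powr (1 / (p + 1)) * D powr (p / (p + 1))))"
    using pos Z by (simp add: field_simps)
  also have "\<dots> = (p + 1) * b" unfolding DD b using D Z by simp
  finally show ?thesis .
qed

lemma M_balance_le: "M * (q - b) * (p * b / \<alpha>) powr (p / (p + 1)) \<le> (p + 1) * b"
proof -
  have "0 \<le> (q - b) * (p * b / \<alpha>) powr (p / (p + 1))" using b_less_q by simp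
  then have "M * ((q - b) * (p * b / \<alpha>) powr (p / (p + 1))) \<le> Mbar N p * ((q - b) * (p * b / \<alpha>) powr (p / (p + 1)))"
    by (rule mult_right_mono[OF M_le_Mbar])
  then show ?thesis using Mbar_balance by (simp add: mult.assoc)
qed

definition profile :: "real \<Rightarrow> real \<Rightarrow> real" where
  "profile X Y = X powr \<alpha> * Y powr (- b) * (- \<alpha> / (2 - b) * Y\<^sup>2 / X + X powr p + M * Y powr q)"

lemma has_real_derivative_profile:
  assumes "X > 0" "Y > 0"
  shows "(profile X has_real_derivative
      X powr \<alpha> * Y powr (- b) * (M * (q - b) * (Y powr q / Y) - \<alpha> * Y / X - b * X powr p / Y)) (at Y)"
proof -
  define c where "c = \<alpha> / (2 - b)"
  have c: "c * (2 - b) = \<alpha>" using b_less_1 by (simp add: c_def)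
  have inv: "X * inverse X = 1" "Y * inverse Y = 1" using assms by auto
  have "((\<lambda>Y. X powr \<alpha> * Y powr (- b) * (- c * Y\<^sup>2 * inverse X + X powr p + M * Y powr q)) has_real_derivative
      X powr \<alpha> * Y powr (- b) * (M * (q - b) * (Y powr q * inverse Y) - \<alpha> * Y * inverse X - b * X powr p * inverse Y)) (at Y)"
    apply (rule derivative_eq_intros \<open>Y > 0\<close> refl | (simp; fail))+
    unfolding powr_diff_one_eq[OF \<open>Y > 0\<close>] using inv c by (simp add: algebra_simps power2_eq_square)
  moreover have "profile X = (\<lambda>Y. X powr \<alpha> * Y powr (- b) * (- c * Y\<^sup>2 * inverse X + X powr p + M * Y powr q))"
    by (simp add: profile_def c_def divide_inverse fun_eq_iff)
  ultimately show ?thesis by (simp add: divide_inverse)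
qed

lemma profile_slope_neg:
  assumes X: "X > 0" and Y: "Y > 0" and off_curve: "\<alpha> * Y\<^sup>2 \<noteq> p * b * X powr (p + 1)"
  shows "M * (q - b) * (Y powr q / Y) < \<alpha> * Y / X + b * X powr p / Y"
proof -
  define l where "l = p / (p + 1)"
  have l: "0 < l" "l < 1" using p_gt_1 by (auto simp: l_def)
  (* In terms of t the claim is Bernoulli's inequality (p + 1) t^l < p t + 1, strict for t \<noteq> 1. *)
  define t where "t = \<alpha> * Y\<^sup>2 / (p * b * X powr (p + 1))"
  have t: "t > 0" "t \<noteq> 1"
    using X Y p_gt_1 alpha_pos b_pos off_curve by (auto simp: t_def)
  have "(Y\<^sup>2 / X powr (p + 1)) powr l = Y powr (2 * l) / X powr ((p + 1) * l)"
    using X Y by (simp add: powr_divide powr_powr flip: powr_numeral)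
  also have "\<dots> = Y powr q / X powr p"
    using p_gt_1 by (simp add: l_def q_def)
  finally have "Y powr q = (Y\<^sup>2 / X powr (p + 1)) powr l * X powr p"
    using X by (simp add: field_simps)
  also have "Y\<^sup>2 / X powr (p + 1) = p * b / \<alpha> * t"
    using alpha_pos b_pos p_gt_1 X by (simp add: t_def field_simps)
  also have "(p * b / \<alpha> * t) powr l = (p * b / \<alpha>) powr l * t powr l"
    by (rule powr_mult)
  finally have Yq: "Y powr q = (p * b / \<alpha>) powr l * t powr l * X powr p" .
  have w: "t powr l * X powr p / Y > 0" using t X Y by simp
  have ptl: "(p + 1) * (l * t + (1 - l)) = p * t + 1" using p_gt_1 by (simp add: l_def field_simps)
  have "M * (q - b) * (Y powr q / Y) = M * (q - b) * (p * b / \<alpha>) powr l * (t powr l * X powr p / Y)"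
    unfolding Yq by (simp add: field_simps)
  also have "\<dots> \<le> (p + 1) * b * (t powr l * X powr p / Y)"
    using M_balance_le w unfolding l_def by (intro mult_right_mono) auto
  also have "\<dots> < (p + 1) * b * ((l * t + (1 - l)) * X powr p / Y)"
    using powr_less_weighted_mean[OF t l] X Y b_pos p_gt_1
    by (intro mult_strict_left_mono divide_strict_right_mono mult_strict_right_mono) auto
  also have "\<dots> = b * ((p + 1) * (l * t + (1 - l))) * X powr p / Y"
    by (simp add: mult_ac)
  also have "\<dots> = b * (p * t + 1) * X powr p / Y"
    by (simp only: ptl)
  also have "\<dots> = \<alpha> * Y / X + b * X powr p / Y"
    using X Y p_gt_1 b_pos unfolding t_def powr_add by (simp add: field_simps power2_eq_square)
  finally show ?thesis .
qed

lemma profile_strict_decreasing: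
  assumes "X > 0" "0 < Y\<^sub>1" "Y\<^sub>1 < Y\<^sub>2"
  shows "profile X Y\<^sub>2 < profile X Y\<^sub>1"
proof (rule DERIV_neg_off_point_imp_decreasing[OF has_real_derivative_profile[OF \<open>X > 0\<close>] _ assms(2,3)])
  fix Y :: real
  assume "0 < Y" and off: "Y \<noteq> sqrt (p * b * X powr (p + 1) / \<alpha>)"
  have "\<alpha> * Y\<^sup>2 \<noteq> p * b * X powr (p + 1)"
  proof
    assume "\<alpha> * Y\<^sup>2 = p * b * X powr (p + 1)"
    then have "Y\<^sup>2 = p * b * X powr (p + 1) / \<alpha>" using alpha_pos by (simp add: field_simps)
    then show False using off \<open>0 < Y\<close> by (metis abs_of_pos real_sqrt_abs)
  qed
  from profile_slope_neg[OF \<open>X > 0\<close> \<open>0 < Y\<close> this]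
  have "M * (q - b) * (Y powr q / Y) - \<alpha> * Y / X - b * X powr p / Y < 0" by simp
  moreover have "X powr \<alpha> * Y powr (- b) > 0" using \<open>X > 0\<close> \<open>0 < Y\<close> by simp
  ultimately show "X powr \<alpha> * Y powr (- b) * (M * (q - b) * (Y powr q / Y) - \<alpha> * Y / X - b * X powr p / Y) < 0"
    by (simp add: mult_pos_neg)
qed simp

lemma profile_on_line:
  assumes "X > 0"
  shows "profile X (a * X) = a powr (- b) * (X powr \<alpha> * X powr (- b)
      * (- \<alpha> / (2 - b) * a\<^sup>2 * X + X powr p + M * a powr q * X powr q))"
proof -
  have "(a * X) powr (- b) = a powr (- b) * X powr (- b)" "(a * X) powr q = a powr q * X powr q"
    by (simp_all add: powr_mult)
  then show ?thesis using assms b_less_1 by (simp add: profile_def field_simps power2_eq_square)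
qed

definition lyapunov :: "real \<Rightarrow> real \<Rightarrow> real" where
  "lyapunov X Y = X powr \<alpha> * Y powr (- b) * (a * X * Y / (1 - b) - Y\<^sup>2 / (2 - b))
     - a powr (- b) * (X powr \<alpha> * X powr (- b) * (- \<alpha> / (2 - b) * a\<^sup>2 * X\<^sup>2 / (\<alpha> - b + 2)
         + X powr p * X / (\<alpha> - b + p + 1) + M * a powr q * X powr q * X / (\<alpha> - b + q + 1)))"

lemma has_real_derivative_lyapunov:
  assumes sol: "solS N p M x y" and x: "x t > 0" and y: "y t > 0"
  shows "((\<lambda>t. lyapunov (x t) (y t)) has_real_derivative
      (a * x t - y t) * (profile (x t) (y t) - profile (x t) (a * x t))) (at t)"
proof -
  define c k i1 i2 j1 j2 j3 where "c = \<alpha> / (2 - b)" and "k = - c * a\<^sup>2"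
    and "i1 = 1 / (1 - b)" and "i2 = 1 / (2 - b)" and "j1 = 1 / (\<alpha> - b + 2)"
    and "j2 = 1 / (\<alpha> - b + p + 1)" and "j3 = 1 / (\<alpha> - b + q + 1)"
  have denominators: "1 - b > 0" "2 - b > 0" "\<alpha> - b + 2 > 0" "\<alpha> - b + p + 1 > 0" "\<alpha> - b + q + 1 > 0"
    using b_less_1 alpha_pos p_gt_1 q_gt_1 by auto
  then have c: "c * (2 - b) = \<alpha>" and i: "i1 * (1 - b) = 1" "i2 * (2 - b) = 1"
    and j: "j1 * (\<alpha> - b + 2) = 1" "j2 * (\<alpha> - b + p + 1) = 1" "j3 * (\<alpha> - b + q + 1) = 1"
    by (simp_all add: c_def i1_def i2_def j1_def j2_def j3_def)
  have K: "Kc N p * (1 - b) = a * (\<alpha> + 1)" using a_alpha_eq_Kc_b by simp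
  note dx = solS_derivatives(1)[OF sol]
  have dy: "(y has_real_derivative (- Kc N p * y t + x t powr p + M * y t powr q)) (at t)"
    using solS_derivatives(2)[OF sol, of t] abs_powr_diff_one_mult[of "x t" p] x y by simp
  have inv: "x t * inverse (x t) = 1" "y t * inverse (y t) = 1" using x y by auto
  have power: "\<And>z::real. z ^ (2 - Suc 0) = z" and two: "real 2 = 2" by simp_all
  have "((\<lambda>t. x t powr \<alpha> * y t powr (- b) * (a * x t * y t * i1 - (y t)\<^sup>2 * i2)
           - a powr (- b) * (x t powr \<alpha> * x t powr (- b) * (k * (x t)\<^sup>2 * j1 + x t powr p * x t * j2
               + M * a powr q * x t powr q * x t * j3)))
        has_real_derivative
          (a * x t - y t) * (x t powr \<alpha> * y t powr (- b) * (- c * (y t)\<^sup>2 * inverse (x t) + x t powr p + M * y t powr q)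
             - a powr (- b) * (x t powr \<alpha> * x t powr (- b) * (k * x t + x t powr p + M * a powr q * x t powr q)))) (at t)"
    apply (rule derivative_eq_intros dx dy x y a_pos refl | (simp; fail))+
    unfolding powr_diff_one_eq[OF x] powr_diff_one_eq[OF y] power two
    using inv K c k_def i j by algebra
  moreover have "(\<lambda>t. lyapunov (x t) (y t)) = (\<lambda>t. x t powr \<alpha> * y t powr (- b) * (a * x t * y t * i1 - (y t)\<^sup>2 * i2)
           - a powr (- b) * (x t powr \<alpha> * x t powr (- b) * (k * (x t)\<^sup>2 * j1 + x t powr p * x t * j2
               + M * a powr q * x t powr q * x t * j3)))"
    by (simp add: fun_eq_iff lyapunov_def c_def k_def i1_def i2_def j1_def j2_def j3_def)
  moreover have "profile (x t) (y t) = x t powr \<alpha> * y t powr (- b) * (- c * (y t)\<^sup>2 * inverse (x t) + x t powr p + M * y t powr q)"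
    by (simp add: profile_def c_def divide_inverse)
  moreover have "profile (x t) (a * x t) = a powr (- b) * (x t powr \<alpha> * x t powr (- b) * (k * x t + x t powr p + M * a powr q * x t powr q))"
    using profile_on_line[OF x] by (simp add: k_def c_def)
  ultimately show ?thesis by simp
qed

theorem no_closed_orbitS_in_open_quadrant:
  assumes orbit: "closed_orbitS N p M x y" and pos: "\<And>t. x t > 0 \<and> y t > 0"
  shows False
proof -
  have sol: "solS N p M x y" using orbit by (simp add: closed_orbitS_def)
  have off_line: "(a * x t - y t) * (profile (x t) (y t) - profile (x t) (a * x t)) > 0"
    if off: "y t \<noteq> a * x t" for t
  proof -
    have x: "x t > 0" and y: "y t > 0" and ax: "a * x t > 0" using pos a_pos by auto
    consider "y t < a * x t" | "a * x t < y t" using off by linarith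
    then show ?thesis
    proof cases
      case 1
      then show ?thesis using profile_strict_decreasing[OF x y 1] by (simp add: mult_pos_pos)
    next
      case 2
      then show ?thesis using profile_strict_decreasing[OF x ax 2] by (simp add: mult_neg_neg)
    qed
  qed
  show False
    by (rule Lyapunov_excludes_closed_orbitS[OF orbit has_real_derivative_lyapunov[OF sol] off_line])
      (use pos in simp_all)
qed

end

theorem lemma3p2:
  fixes N :: nat and p M :: real
  assumes "N \<ge> 3"
  shows "(M > 0 \<and> 1 < p \<and> p \<le> (real N + 2) / (real N - 2) \<longrightarrow>
            \<not> (\<exists>x y. closed_orbitS N p M x y \<and> (\<forall>t. x t \<ge> 0 \<and> y t \<ge> 0)))
       \<and> (p > (real N + 2) / (real N - 2) \<and> 0 < M \<and> M \<le> Mbar N p \<longrightarrow>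
            \<not> (\<exists>x y. closed_orbitS N p M x y \<and> (\<forall>t. x t > 0 \<and> y t > 0)
                     \<and> surrounds (orbit_set x y) (PM N p M)))"
proof (intro conjI impI notI)
  assume "M > 0 \<and> 1 < p \<and> p \<le> (real N + 2) / (real N - 2)"
  then interpret subcritical N p M using assms by unfold_locales auto
  assume "\<exists>x y. closed_orbitS N p M x y \<and> (\<forall>t. x t \<ge> 0 \<and> y t \<ge> 0)"
  then show False using no_closed_orbitS_in_closed_quadrant by blast
next
  assume "p > (real N + 2) / (real N - 2) \<and> 0 < M \<and> M \<le> Mbar N p"
  then interpret supercritical N p M using assms by unfold_locales auto
  assume "\<exists>x y. closed_orbitS N p M x y \<and> (\<forall>t. x t > 0 \<and> y t > 0)
      \<and> surrounds (orbit_set x y) (PM N p M)"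
  then show False using no_closed_orbitS_in_open_quadrant by blast
qed

end
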